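(* Let $\phi:\mathbb{R}^\ell\to[0,\infty)$ be continuously differentiable and let $H=\prod_{i=1}^\ell[a_i,b_i]$ with $a_i<b_i$ be a hyperrectangle with corners $z_1,\dots,z_{2^\ell}$ and side lengths $\delta z_i=b_i-a_i$, $i=1,\dots,\ell$. Let $L_1,\dots,L_\ell$ satisfy $L_i\ge|(\nabla\phi(z))_i|$ for all $z\in H$ and $i=1,\dots,\ell$. Let $\tau\in\mathbb{R}$ and $\gamma^*\ge\max_{i=1,\dots,2^\ell}\phi(z_i)$. If $$\sum_{j=1}^\ell L_j\,\delta z_j<2\gamma^*+2\tau-\frac{2\sum_{i=1}^{2^\ell}\phi(z_i)}{2^\ell},$$ then $\phi(z)<\gamma^*+\tau$ for all $z\in H$. *)

theory Defs
  imports "HOL-Analysis.Analysis"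
begin

end

theory Submission
  imports Defs
begin

text \<open>
  By the mean value theorem, \<open>\<phi> z \<le> \<phi> c + (\<Sum>j. L\<^sub>j \<bar>z\<^sub>j - c\<^sub>j\<bar>)\<close> for every point \<open>z\<close> and every
  corner \<open>c\<close> of the box. Averaging over the \<open>2\<^sup>\<ell>\<close> corners, and pairing each corner with its
  mirror image in coordinate \<open>j\<close>, the mean of \<open>\<bar>z\<^sub>j - c\<^sub>j\<bar>\<close> is exactly \<open>\<delta>z\<^sub>j / 2\<close>. Hence
  \<open>\<phi> z\<close> is at most the mean corner value plus \<open>(\<Sum>j. L\<^sub>j \<delta>z\<^sub>j) / 2\<close>, which the hypothesis bounds
  by \<open>\<gamma>\<^sup>* + \<tau>\<close>. The bound \<open>\<gamma>\<^sup>*\<close> on the corner values, the nonnegativity of \<open>\<phi>\<close> and the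
  continuity of the gradient are not needed.
\<close>

lemma diff_le_sum_gradient_bound:
  fixes f :: "real^'n \<Rightarrow> real" and G :: "real^'n \<Rightarrow> real^'n"
  assumes "convex S" "x \<in> S" "y \<in> S"
    and deriv: "\<And>u. u \<in> S \<Longrightarrow> (f has_derivative (\<lambda>h. G u \<bullet> h)) (at u)"
    and bound: "\<And>u i. u \<in> S \<Longrightarrow> \<bar>G u $ i\<bar> \<le> L $ i"
  shows "f y - f x \<le> (\<Sum>i\<in>UNIV. L $ i * \<bar>y $ i - x $ i\<bar>)"
proof -
  define p where "p t = x + t *\<^sub>R (y - x)" for t
  have p_in: "p t \<in> S" if "0 \<le> t" "t \<le> 1" for t
    using convexD_alt[OF assms(1-3) that] by (simp add: p_def algebra_simps)
  have p_deriv: "((f \<circ> p) has_real_derivative G (p t) \<bullet> (y - x)) (at t)"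
    if "0 \<le> t" "t \<le> 1" for t
  proof -
    have "(p has_derivative (\<lambda>h. h *\<^sub>R (y - x))) (at t)"
      unfolding p_def by (auto intro!: derivative_eq_intros)
    from has_derivative_compose[OF this deriv[OF p_in[OF that]]]
    show ?thesis
      by (simp add: has_field_derivative_def o_def mult_commute_abs)
  qed
  then obtain s where s: "0 < s" "s < 1" and mvt: "f y - f x = G (p s) \<bullet> (y - x)"
    using MVT2[of 0 1 "f \<circ> p", OF _ p_deriv] by (auto simp: p_def)
  note mvt
  also have "\<dots> = (\<Sum>i\<in>UNIV. G (p s) $ i * (y $ i - x $ i))"
    by (simp add: inner_vec_def)
  also have "\<dots> \<le> (\<Sum>i\<in>UNIV. L $ i * \<bar>y $ i - x $ i\<bar>)"
  proof (rule sum_mono)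
    fix i
    have "G (p s) $ i * (y $ i - x $ i) \<le> \<bar>G (p s) $ i\<bar> * \<bar>y $ i - x $ i\<bar>"
      by (metis abs_ge_self abs_mult)
    also have "\<dots> \<le> L $ i * \<bar>y $ i - x $ i\<bar>"
      using bound[OF p_in] s by (intro mult_right_mono) auto
    finally show "G (p s) $ i * (y $ i - x $ i) \<le> L $ i * \<bar>y $ i - x $ i\<bar>" .
  qed
  finally show ?thesis .
qed

lemma vec_components_eq_image_PiE:
  "{x::'a^'n. \<forall>j. x $ j \<in> A j} = vec_lambda ` (\<Pi>\<^sub>E j\<in>UNIV. A j)"
proof (intro set_eqI iffI)
  fix x :: "'a^'n"
  assume "x \<in> {x. \<forall>j. x $ j \<in> A j}"
  then have "vec_nth x \<in> (\<Pi>\<^sub>E j\<in>UNIV. A j)" by auto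
  then show "x \<in> vec_lambda ` (\<Pi>\<^sub>E j\<in>UNIV. A j)"
    by (metis image_eqI vec_nth_inverse)
qed auto

lemma card_vec_components:
  "card {x::'a^'n. \<forall>j. x $ j \<in> A j} = (\<Prod>j\<in>UNIV. card (A j))"
proof -
  have "inj_on vec_lambda (\<Pi>\<^sub>E j\<in>UNIV. A j)"
    by (rule inj_onI) (metis vec_lambda_inverse UNIV_I)
  then show ?thesis
    by (simp add: vec_components_eq_image_PiE card_image card_PiE)
qed

definition box_corners :: "'a^'n \<Rightarrow> 'a^'n \<Rightarrow> ('a^'n) set" where
  "box_corners a b = {x. \<forall>j. x $ j = a $ j \<or> x $ j = b $ j}"

lemma box_corners_component: "c \<in> box_corners a b \<Longrightarrow> c $ j = a $ j \<or> c $ j = b $ j"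
  by (simp add: box_corners_def)

lemma box_corners_eq_vec_components: "box_corners a b = {x. \<forall>j. x $ j \<in> {a $ j, b $ j}}"
  by (simp add: box_corners_def)

lemma finite_box_corners: "finite (box_corners a b)"
  unfolding box_corners_eq_vec_components vec_components_eq_image_PiE
  by (intro finite_imageI finite_PiE) auto

lemma card_box_corners:
  fixes a b :: "'a^'n"
  assumes "\<And>j. a $ j \<noteq> b $ j"
  shows "card (box_corners a b) = 2 ^ CARD('n)"
  using assms unfolding box_corners_eq_vec_components card_vec_components
  by (simp add: numeral_2_eq_2)

lemma box_corners_subset_cbox:
  fixes a b :: "real^'n"
  assumes "\<And>j. a $ j \<le> b $ j"
  shows "box_corners a b \<subseteq> cbox a b"
proof
  fix x assume "x \<in> box_corners a b"
  then have "x $ j = a $ j \<or> x $ j = b $ j" for j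
    by (rule box_corners_component)
  then show "x \<in> cbox a b"
    using assms by (auto simp: interval_cart) (metis order_refl)+
qed

lemma card_box_corners_pos: "card (box_corners a b) > 0"
  using finite_box_corners[of a b] by (auto simp: card_gt_0_iff box_corners_def)

lemma sum_plus_involution:
  fixes f :: "'a \<Rightarrow> 'b::comm_semiring_1"
  assumes "\<And>c. c \<in> C \<Longrightarrow> \<sigma> c \<in> C" "\<And>c. c \<in> C \<Longrightarrow> \<sigma> (\<sigma> c) = c"
  shows "2 * sum f C = (\<Sum>c\<in>C. f c + f (\<sigma> c))"
proof -
  have "sum f C = sum (f \<circ> \<sigma>) C"
    by (rule sum.reindex_bij_witness[where i = \<sigma> and j = \<sigma>]) (use assms in auto)
  then show ?thesis
    by (simp add: mult_2 sum.distrib)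
qed

lemma sum_box_corners_dist_component:
  fixes a b z :: "real^'n"
  assumes "a $ j \<le> z $ j" "z $ j \<le> b $ j"
  shows "(\<Sum>c\<in>box_corners a b. \<bar>z $ j - c $ j\<bar>) = card (box_corners a b) * (b $ j - a $ j) / 2"
proof -
  define mirror :: "real^'n \<Rightarrow> real^'n"
    where "mirror c = (\<chi> k. if k = j then a $ j + b $ j - c $ j else c $ k)" for c
  have "2 * (\<Sum>c\<in>box_corners a b. \<bar>z $ j - c $ j\<bar>)
      = (\<Sum>c\<in>box_corners a b. \<bar>z $ j - c $ j\<bar> + \<bar>z $ j - mirror c $ j\<bar>)"
  proof (rule sum_plus_involution)
    fix c assume "c \<in> box_corners a b"
    then have corner: "c $ k = a $ k \<or> c $ k = b $ k" for k
      by (rule box_corners_component)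
    then show "mirror c \<in> box_corners a b" "mirror (mirror c) = c"
      by (auto simp: box_corners_def mirror_def vec_eq_iff) (metis corner)
  qed
  also have "\<dots> = (\<Sum>c\<in>box_corners a b. b $ j - a $ j)"
  proof (rule sum.cong[OF refl])
    fix c assume "c \<in> box_corners a b"
    then have "c $ j = a $ j \<or> c $ j = b $ j"
      by (rule box_corners_component)
    then show "\<bar>z $ j - c $ j\<bar> + \<bar>z $ j - mirror c $ j\<bar> = b $ j - a $ j"
      using assms by (auto simp: mirror_def)
  qed
  finally show ?thesis by simp
qed

lemma le_box_corners_average:
  fixes f :: "real^'n \<Rightarrow> real" and G :: "real^'n \<Rightarrow> real^'n"
  assumes ab: "\<And>j. a $ j \<le> b $ j"
    and deriv: "\<And>u. u \<in> cbox a b \<Longrightarrow> (f has_derivative (\<lambda>h. G u \<bullet> h)) (at u)"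
    and bound: "\<And>u i. u \<in> cbox a b \<Longrightarrow> \<bar>G u $ i\<bar> \<le> L $ i"
    and z: "z \<in> cbox a b"
  shows "f z \<le> (\<Sum>c\<in>box_corners a b. f c) / card (box_corners a b)
                + (\<Sum>j\<in>UNIV. L $ j * (b $ j - a $ j)) / 2"
proof -
  let ?C = "box_corners a b"
  let ?N = "real (card ?C)"
  have "?N * f z = (\<Sum>c\<in>?C. f z)"
    by simp
  also have "\<dots> \<le> (\<Sum>c\<in>?C. f c + (\<Sum>j\<in>UNIV. L $ j * \<bar>z $ j - c $ j\<bar>))"
    using diff_le_sum_gradient_bound[OF convex_box(1) _ z deriv bound]
      box_corners_subset_cbox[OF ab]
    by (intro sum_mono) (simp add: subset_iff diff_le_eq add.commute)
  also have "\<dots> = (\<Sum>c\<in>?C. f c) + (\<Sum>j\<in>UNIV. L $ j * (\<Sum>c\<in>?C. \<bar>z $ j - c $ j\<bar>))"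
    by (simp add: sum.distrib sum_distrib_left sum.swap[of _ ?C])
  also have "\<dots> = (\<Sum>c\<in>?C. f c) + (\<Sum>j\<in>UNIV. L $ j * (?N * (b $ j - a $ j) / 2))"
  proof -
    have mean_dist: "(\<Sum>c\<in>?C. \<bar>z $ j - c $ j\<bar>) = ?N * (b $ j - a $ j) / 2" for j
      using z by (intro sum_box_corners_dist_component) (auto simp: interval_cart)
    show ?thesis
      by (simp add: mean_dist)
  qed
  also have "\<dots> = (\<Sum>c\<in>?C. f c) + ?N * (\<Sum>j\<in>UNIV. L $ j * (b $ j - a $ j)) / 2"
    by (simp add: sum_distrib_left sum_divide_distrib mult.left_commute)
  finally show ?thesis
    using card_box_corners_pos[of a b] by (simp add: field_simps)
qed

theorem lemma3p10:
  fixes \<phi> :: "real^'n \<Rightarrow> real"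
    and G :: "real^'n \<Rightarrow> real^'n"
    and a b L :: "real^'n"
    and \<tau> \<gamma> :: real
  assumes nonneg: "\<And>x. \<phi> x \<ge> 0"
    and grad: "\<And>x. (\<phi> has_derivative (\<lambda>h. G x \<bullet> h)) (at x)"
    and grad_cont: "continuous_on UNIV G"
    and ab: "\<And>i. a $ i < b $ i"
    and L: "\<And>z i. z \<in> {x. \<forall>j. a $ j \<le> x $ j \<and> x $ j \<le> b $ j} \<Longrightarrow> L $ i \<ge> \<bar>G z $ i\<bar>"
    and gamma: "\<And>z. z \<in> {x. \<forall>j. x $ j = a $ j \<or> x $ j = b $ j} \<Longrightarrow> \<gamma> \<ge> \<phi> z"
    and hyp: "(\<Sum>j\<in>UNIV. L $ j * (b $ j - a $ j))
              < 2 * \<gamma> + 2 * \<tau>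
                - 2 * (\<Sum>z\<in>{x. \<forall>j. x $ j = a $ j \<or> x $ j = b $ j}. \<phi> z) / 2 ^ CARD('n)"
  shows "\<forall>z\<in>{x. \<forall>j. a $ j \<le> x $ j \<and> x $ j \<le> b $ j}. \<phi> z < \<gamma> + \<tau>"
  unfolding interval_cart(2)[symmetric]
proof
  fix z assume "z \<in> cbox a b"
  then have "\<phi> z \<le> (\<Sum>c\<in>box_corners a b. \<phi> c) / card (box_corners a b)
                    + (\<Sum>j\<in>UNIV. L $ j * (b $ j - a $ j)) / 2"
    using ab L by (intro le_box_corners_average[OF less_imp_le grad]) (auto simp: interval_cart)
  also have "card (box_corners a b) = 2 ^ CARD('n)"
    using ab by (simp add: card_box_corners less_imp_neq)
  finally show "\<phi> z < \<gamma> + \<tau>"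
    using hyp by (simp add: box_corners_def)
qed

end
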